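(* Let $n\ge 3$ and let $L^B$ be a blow-up of $L\cong\mathbf{2}^n$ with atoms $q_1,\dots,q_n$. Then: (1) if $L^B\cong L\cong\mathbf{2}^n$ (all chains are single elements), then $\beta(G(L^B)_{SR})=n-2$; (2) if $|[q_i]|\ge2$ for every $1\le i\le n$, then $\beta(G(L^B)_{SR})=2n-2$; (3) if exactly $m$ of the indices $i$ satisfy $|[q_i]|=1$, then $\beta(G(L^B)_{SR})=2n-m-2$.
   Context: Blow-up: for $L\cong\mathbf{2}^n$ with atoms $q_1,\dots,q_n$, replace each $a\in L\setminus\{0,1\}$ by a finite chain $C_a$: $a=a^1\lessdot\cdots\lessdot a^{k_a}$ ($k_a\ge1$), keep $0,1$; elements of one chain are ordered along it, and for $u\in C_a,v\in C_b$ with $a\ne b$ ($C_0=\{0\},C_1=\{1\}$), $u\le v$ iff $a<b$ in $L$. $G(L^B)$ is the zero-divisor graph of $L^B$ (vertices: nonzero elements with a nonzero element meeting them in $0$; adjacency: meet $=0$). $[x]=\{y:y^\perp=x^\perp\}$ with $x^\perp=\{z:x\wedge z=0\}$; so $[q_i]=C_{q_i}$. In a graph $G$, $u$ is maximally distant from $v$ if $d(v,w)\le d(u,v)$ for all neighbours $w$ of $u$; $u,v$ are mutually maximally distant if each is maximally distant from the other; the strong resolving graph $G_{SR}$ has as vertices those $u$ which are mutually maximally distant with some vertex, with $u,v$ adjacent iff mutually maximally distant. $\beta$ denotes the independence number. *)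

theory Defs
  imports Main
begin

text \<open>L = 2^n is modelled as the subsets of {..<n}; the atom q_i is {i}.
  An element of the blow-up L^B is a pair (a, j): the j-th element a^j of the chain C_a
  (1 <= j <= k a); 0 = ({},1) and 1 = ({..<n},1).\<close>

definition proper_elt :: "nat \<Rightarrow> nat set \<Rightarrow> bool" where
  "proper_elt n a \<longleftrightarrow> a \<subseteq> {..<n} \<and> a \<noteq> {} \<and> a \<noteq> {..<n}"

definition blowup_carrier :: "nat \<Rightarrow> (nat set \<Rightarrow> nat) \<Rightarrow> (nat set \<times> nat) set" where
  "blowup_carrier n k = {(a, j). a \<subseteq> {..<n} \<and>
      (if proper_elt n a then 1 \<le> j \<and> j \<le> k a else j = 1)}"

definition blowup_le :: "nat set \<times> nat \<Rightarrow> nat set \<times> nat \<Rightarrow> bool" where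
  "blowup_le x y \<longleftrightarrow> (fst x = fst y \<and> snd x \<le> snd y) \<or> fst x \<subset> fst y"

definition blowup_bot :: "nat set \<times> nat" where
  "blowup_bot = ({}, 1)"

definition is_meet :: "'a set \<Rightarrow> ('a \<Rightarrow> 'a \<Rightarrow> bool) \<Rightarrow> 'a \<Rightarrow> 'a \<Rightarrow> 'a \<Rightarrow> bool" where
  "is_meet V le x y z \<longleftrightarrow> z \<in> V \<and> le z x \<and> le z y \<and>
      (\<forall>w\<in>V. le w x \<and> le w y \<longrightarrow> le w z)"

definition zd_verts :: "'a set \<Rightarrow> ('a \<Rightarrow> 'a \<Rightarrow> bool) \<Rightarrow> 'a \<Rightarrow> 'a set" where
  "zd_verts V le z0 = {x \<in> V. x \<noteq> z0 \<and> (\<exists>y\<in>V. y \<noteq> z0 \<and> is_meet V le x y z0)}"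

definition zd_adj :: "'a set \<Rightarrow> ('a \<Rightarrow> 'a \<Rightarrow> bool) \<Rightarrow> 'a \<Rightarrow> 'a \<Rightarrow> 'a \<Rightarrow> bool" where
  "zd_adj V le z0 x y \<longleftrightarrow> x \<in> zd_verts V le z0 \<and> y \<in> zd_verts V le z0 \<and> x \<noteq> y
      \<and> is_meet V le x y z0"

definition perp :: "'a set \<Rightarrow> ('a \<Rightarrow> 'a \<Rightarrow> bool) \<Rightarrow> 'a \<Rightarrow> 'a \<Rightarrow> 'a set" where
  "perp V le z0 x = {z \<in> V. is_meet V le x z z0}"

definition eq_class :: "'a set \<Rightarrow> ('a \<Rightarrow> 'a \<Rightarrow> bool) \<Rightarrow> 'a \<Rightarrow> 'a \<Rightarrow> 'a set" where
  "eq_class V le z0 x = {y \<in> V. perp V le z0 y = perp V le z0 x}"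

definition walk_len :: "'a set \<Rightarrow> ('a \<Rightarrow> 'a \<Rightarrow> bool) \<Rightarrow> 'a \<Rightarrow> 'a \<Rightarrow> nat \<Rightarrow> bool" where
  "walk_len VG E u v l \<longleftrightarrow> (\<exists>ps. length ps = Suc l \<and> hd ps = u \<and> last ps = v \<and>
      set ps \<subseteq> VG \<and> (\<forall>i<l. E (ps ! i) (ps ! Suc i)))"

definition gdist :: "'a set \<Rightarrow> ('a \<Rightarrow> 'a \<Rightarrow> bool) \<Rightarrow> 'a \<Rightarrow> 'a \<Rightarrow> nat" where
  "gdist VG E u v = (LEAST l. walk_len VG E u v l)"

definition max_distant :: "'a set \<Rightarrow> ('a \<Rightarrow> 'a \<Rightarrow> bool) \<Rightarrow> 'a \<Rightarrow> 'a \<Rightarrow> bool" where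
  "max_distant VG E u v \<longleftrightarrow>
     (\<forall>w\<in>VG. E u w \<longrightarrow> gdist VG E v w \<le> gdist VG E u v)"

definition mutually_max_distant :: "'a set \<Rightarrow> ('a \<Rightarrow> 'a \<Rightarrow> bool) \<Rightarrow> 'a \<Rightarrow> 'a \<Rightarrow> bool" where
  "mutually_max_distant VG E u v \<longleftrightarrow> u \<in> VG \<and> v \<in> VG \<and>
     max_distant VG E u v \<and> max_distant VG E v u"

definition sr_verts :: "'a set \<Rightarrow> ('a \<Rightarrow> 'a \<Rightarrow> bool) \<Rightarrow> 'a set" where
  "sr_verts VG E = {u \<in> VG. \<exists>v\<in>VG. mutually_max_distant VG E u v}"

definition sr_adj :: "'a set \<Rightarrow> ('a \<Rightarrow> 'a \<Rightarrow> bool) \<Rightarrow> 'a \<Rightarrow> 'a \<Rightarrow> bool" where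
  "sr_adj VG E u v \<longleftrightarrow> u \<noteq> v \<and> mutually_max_distant VG E u v"

definition indep_number :: "'a set \<Rightarrow> ('a \<Rightarrow> 'a \<Rightarrow> bool) \<Rightarrow> nat" where
  "indep_number VG E = Max {card S | S. S \<subseteq> VG \<and> (\<forall>x\<in>S. \<forall>y\<in>S. \<not> E x y)}"

definition blowup_zd_verts :: "nat \<Rightarrow> (nat set \<Rightarrow> nat) \<Rightarrow> (nat set \<times> nat) set" where
  "blowup_zd_verts n k = zd_verts (blowup_carrier n k) blowup_le blowup_bot"

definition blowup_zd_adj :: "nat \<Rightarrow> (nat set \<Rightarrow> nat) \<Rightarrow> nat set \<times> nat \<Rightarrow> nat set \<times> nat \<Rightarrow> bool" where
  "blowup_zd_adj n k = zd_adj (blowup_carrier n k) blowup_le blowup_bot"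

definition beta_SR :: "nat \<Rightarrow> (nat set \<Rightarrow> nat) \<Rightarrow> nat" where
  "beta_SR n k = indep_number
     (sr_verts (blowup_zd_verts n k) (blowup_zd_adj n k))
     (sr_adj (blowup_zd_verts n k) (blowup_zd_adj n k))"

definition atom_class_card :: "nat \<Rightarrow> (nat set \<Rightarrow> nat) \<Rightarrow> nat \<Rightarrow> nat" where
  "atom_class_card n k i = card (eq_class (blowup_carrier n k) blowup_le blowup_bot ({i}, 1))"

end

theory Submission
  imports Defs
begin

text \<open>In the zero-divisor graph of the blow-up, the elements of the chain over a proper
  subset a of {0..n-1} are the vertices, and two vertices are adjacent iff their underlying sets
  are disjoint. Distances are therefore 1, 2 or 3 according as the underlying sets are disjoint,
  meet without covering, or meet and cover, and u, v are mutually maximally distant iff they are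
  distinct and their underlying sets meet without either strictly containing the other. Hence a
  set of vertices is independent in the strong resolving graph iff the underlying sets are
  pairwise distinct and form a laminar family; moreover an atom whose chain is a single element
  (|[q_i]| = 1) is not a vertex of the strong resolving graph at all. A laminar family of
  nonempty subsets of an n-set has fewer than 2n members, so adjoining the whole set and the m
  rigid atoms to the underlying sets of an independent set bounds its size by 2n - 2 - m. The
  bound is attained by the remaining atoms together with the initial segments {0,...,t-1},
  2 \<le> t < n.\<close>

section \<open>Laminar families\<close>

definition laminar :: "'a set set \<Rightarrow> bool" where
  "laminar F \<longleftrightarrow> (\<forall>A\<in>F. \<forall>B\<in>F. A \<subseteq> B \<or> B \<subseteq> A \<or> A \<inter> B = {})"

lemma laminar_subset: "laminar F \<Longrightarrow> G \<subseteq> F \<Longrightarrow> laminar G"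
  unfolding laminar_def by blast

lemma laminar_image_Diff_singleton: "laminar F \<Longrightarrow> laminar ((\<lambda>A. A - {x}) ` F)"
  unfolding laminar_def by blast

lemma laminar_insert_superset: "laminar F \<Longrightarrow> \<forall>A\<in>F. A \<subseteq> X \<Longrightarrow> laminar (insert X F)"
  unfolding laminar_def by blast

lemma laminar_Un_singletons: "laminar F \<Longrightarrow> laminar (F \<union> (\<lambda>i. {i}) ` I)"
  unfolding laminar_def by blast

lemma laminar_lessThan: "laminar ((\<lambda>t. {..<t::nat}) ` T)"
  unfolding laminar_def by (metis image_iff lessThan_subset_iff nle_le)

lemma laminar_extension_unique:
  assumes lam: "laminar F" and ne: "{} \<notin> F"
    and A: "A \<in> F" "x \<in> A" "A - {x} \<in> F" and B: "B \<in> F" "x \<in> B" "B - {x} \<in> F"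
  shows "A = B"
proof -
  have sub: "A' \<subseteq> B'"
    if "B' \<subseteq> A'" "A' - {x} \<in> F" "B' \<in> F" "x \<in> B'" "B' - {x} \<in> F" for A' B'
  proof -
    \<comment> \<open>B' meets A' - {x} in the nonempty set B' - {x} but is not contained in it\<close>
    have "B' - {x} \<noteq> {}" using that(5) ne by metis
    then have "B' \<inter> (A' - {x}) \<noteq> {}" "\<not> B' \<subseteq> A' - {x}" using that(1,4) by auto
    then have "A' - {x} \<subseteq> B'"
      using lam[unfolded laminar_def, rule_format, OF that(2,3)] by blast
    then show ?thesis using that(4) by blast
  qed
  have "A \<subseteq> B \<or> B \<subseteq> A"
    using lam[unfolded laminar_def, rule_format, OF A(1) B(1)] A(2) B(2) by blast
  then show ?thesis using sub[OF _ A(3) B] sub[OF _ B(3) A] by blast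
qed

lemma card_laminar_less:
  assumes "finite X" "X \<noteq> {}"
  shows "F \<subseteq> Pow X \<Longrightarrow> {} \<notin> F \<Longrightarrow> laminar F \<Longrightarrow> card F < 2 * card X"
  using assms
proof (induction X arbitrary: F rule: finite_ne_induct)
  case (singleton x)
  have "A = {x}" if "A \<in> F" for A
  proof -
    have "A \<subseteq> {x}" "A \<noteq> {}" using that singleton.prems(1,2) by auto
    then show ?thesis by (simp add: subset_singleton_iff)
  qed
  then have "F \<subseteq> {{x}}" by blast
  then show ?case using card_mono[of "{{x}}" F] by simp
next
  case (insert x X)
  \<comment> \<open>removing x maps F injectively to a laminar family over X, except for {x} and the
    sets A with A - {x} \<in> F, of which there is at most one\<close>
  define H where "H = {A \<in> F. x \<in> A \<and> A - {x} \<in> F}"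
  define G where "G = F - H - {{x}}"
  have "finite F"
    using insert.prems(1) by (rule finite_subset) (simp add: insert.hyps(1))
  have "finite H" using \<open>finite F\<close> unfolding H_def by simp
  have "card H \<le> 1"
  proof -
    have "A = B" if "A \<in> H" "B \<in> H" for A B
      using that laminar_extension_unique[OF insert.prems(3,2), of A x B] unfolding H_def by simp
    then show ?thesis using \<open>finite H\<close> by (simp add: card_le_Suc0_iff_eq)
  qed
  have mem: "x \<in> B" if "A \<in> G" "B \<in> G" "A - {x} = B - {x}" "x \<in> A" for A B
  proof (rule ccontr)
    assume "x \<notin> B"
    then have "A - {x} \<in> F" using that(2,3) unfolding G_def by simp
    then show False using that(1,4) unfolding G_def H_def by simp
  qed
  have inj: "inj_on (\<lambda>A. A - {x}) G"
  proof (rule inj_onI)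
    fix A B assume "A \<in> G" "B \<in> G" "A - {x} = B - {x}"
    then have "x \<in> A \<longleftrightarrow> x \<in> B" using mem[of A B] mem[of B A] by metis
    then show "A = B" using \<open>A - {x} = B - {x}\<close> by (auto simp: set_eq_iff)
  qed
  have "(\<lambda>A. A - {x}) ` G \<subseteq> Pow X" using insert.prems(1) unfolding G_def by auto
  moreover have "{} \<notin> (\<lambda>A. A - {x}) ` G"
  proof
    assume "{} \<in> (\<lambda>A. A - {x}) ` G"
    then obtain A where "A \<in> G" "A - {x} = {}" by auto
    then have "A \<subseteq> {x}" "A \<noteq> {}" using insert.prems(2) unfolding G_def by auto
    then have "A = {x}" by (simp add: subset_singleton_iff)
    then show False using \<open>A \<in> G\<close> unfolding G_def by simp
  qed
  moreover have "laminar ((\<lambda>A. A - {x}) ` G)"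
    by (rule laminar_subset[OF laminar_image_Diff_singleton[OF insert.prems(3)]])
      (auto simp: G_def)
  ultimately have "card G < 2 * card X"
    using insert.IH[of "(\<lambda>A. A - {x}) ` G"] card_image[OF inj] by simp
  have "card F \<le> card (insert {x} (G \<union> H))"
    by (rule card_mono) (auto simp: G_def \<open>finite F\<close> \<open>finite H\<close>)
  also have "\<dots> \<le> card G + card H + 1"
  proof -
    have "finite (G \<union> H)" using \<open>finite F\<close> \<open>finite H\<close> unfolding G_def by simp
    then show ?thesis using card_Un_le[of G H] by (simp add: card_insert_if)
  qed
  finally show ?case using \<open>card G < 2 * card X\<close> \<open>card H \<le> 1\<close> insert.hyps by simp
qed

section \<open>Short walks and independence numbers\<close>

lemma walk_len_0_iff: "walk_len VG E u v 0 \<longleftrightarrow> u \<in> VG \<and> u = v"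
  unfolding walk_len_def by (auto simp: length_Suc_conv intro!: exI[of _ "[u]"])

lemma walk_len_1_iff: "walk_len VG E u v (Suc 0) \<longleftrightarrow> u \<in> VG \<and> v \<in> VG \<and> E u v"
  unfolding walk_len_def by (auto simp: length_Suc_conv intro!: exI[of _ "[u, v]"])

lemma walk_len_2_iff:
  "walk_len VG E u v (Suc (Suc 0)) \<longleftrightarrow> (\<exists>w\<in>VG. u \<in> VG \<and> v \<in> VG \<and> E u w \<and> E w v)"
proof
  assume "walk_len VG E u v (Suc (Suc 0))"
  then obtain ps where ps: "length ps = Suc (Suc (Suc 0))" "hd ps = u" "last ps = v"
    "set ps \<subseteq> VG" "\<forall>i<Suc (Suc 0). E (ps ! i) (ps ! Suc i)"
    unfolding walk_len_def by blast
  then obtain w where "ps = [u, w, v]" by (auto simp: length_Suc_conv)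
  with ps show "\<exists>w\<in>VG. u \<in> VG \<and> v \<in> VG \<and> E u w \<and> E w v"
    by (intro bexI[of _ w]) (auto simp: less_Suc_eq)
next
  assume "\<exists>w\<in>VG. u \<in> VG \<and> v \<in> VG \<and> E u w \<and> E w v"
  then obtain w where "w \<in> VG" "u \<in> VG" "v \<in> VG" "E u w" "E w v" by blast
  then show "walk_len VG E u v (Suc (Suc 0))"
    unfolding walk_len_def by (intro exI[of _ "[u, w, v]"]) (auto simp: less_Suc_eq)
qed

lemma walk_len_3I:
  "\<lbrakk>u \<in> VG; w1 \<in> VG; w2 \<in> VG; v \<in> VG; E u w1; E w1 w2; E w2 v\<rbrakk>
   \<Longrightarrow> walk_len VG E u v (Suc (Suc (Suc 0)))"
  unfolding walk_len_def by (rule exI[of _ "[u, w1, w2, v]"]) (auto simp: less_Suc_eq)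

lemma gdist_eqI:
  "walk_len VG E u v d \<Longrightarrow> (\<And>l. l < d \<Longrightarrow> \<not> walk_len VG E u v l) \<Longrightarrow> gdist VG E u v = d"
  unfolding gdist_def by (rule Least_equality) (auto simp: not_less[symmetric])

lemma indep_number_eqI:
  assumes bound: "\<And>S. S \<subseteq> VG \<Longrightarrow> \<forall>x\<in>S. \<forall>y\<in>S. \<not> E x y \<Longrightarrow> card S \<le> b"
    and "S \<subseteq> VG" "\<forall>x\<in>S. \<forall>y\<in>S. \<not> E x y" "card S = b"
  shows "indep_number VG E = b"
proof -
  let ?C = "{card S |S. S \<subseteq> VG \<and> (\<forall>x\<in>S. \<forall>y\<in>S. \<not> E x y)}"
  have le: "c \<le> b" if c: "c \<in> ?C" for c
  proof -
    obtain S' where "c = card S'" "S' \<subseteq> VG" "\<forall>x\<in>S'. \<forall>y\<in>S'. \<not> E x y" using c by blast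
    then show ?thesis using bound by simp
  qed
  then have "finite ?C" by (meson atMost_iff finite_atMost finite_subset subsetI)
  moreover have "b \<in> ?C" using assms(2-4) by blast
  ultimately show ?thesis unfolding indep_number_def using le by (intro Max_eqI)
qed

section \<open>The zero-divisor graph of the blow-up\<close>

lemma proper_elt_singleton:
  assumes "i < n" "2 \<le> n" shows "proper_elt n {i}"
proof -
  have "card {i} \<noteq> card {..<n}" using assms(2) by simp
  then have "{i} \<noteq> {..<n}" by metis
  then show ?thesis using assms(1) unfolding proper_elt_def by simp
qed

lemma proper_elt_lessThan: "0 < t \<Longrightarrow> t < n \<Longrightarrow> proper_elt n {..<t}"
  unfolding proper_elt_def by (auto simp: lessThan_subset_iff lessThan_eq_iff)

lemma proper_elt_Diff: "proper_elt n a \<Longrightarrow> proper_elt n ({..<n} - a)"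
  unfolding proper_elt_def by auto

lemma lessThan_ne_singleton:
  assumes "2 \<le> t" shows "{..<t} \<noteq> {i::nat}"
proof -
  have "0 \<in> {..<t}" "1 \<in> {..<t}" using assms by auto
  then show ?thesis by (metis singletonD zero_neq_one)
qed

locale blowup =
  fixes n :: nat and k :: "nat set \<Rightarrow> nat"
  assumes n_ge_3: "3 \<le> n" and chain_len_pos: "\<forall>a. proper_elt n a \<longrightarrow> 1 \<le> k a"
begin

abbreviation V where "V \<equiv> blowup_carrier n k"
abbreviation E where "E \<equiv> blowup_zd_adj n k"

definition vertices :: "(nat set \<times> nat) set" where
  "vertices = {x. proper_elt n (fst x) \<and> 1 \<le> snd x \<and> snd x \<le> k (fst x)}"

definition compl_vertex :: "nat set \<times> nat \<Rightarrow> nat set \<times> nat" where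
  "compl_vertex x = ({..<n} - fst x, 1)"

lemma carrier_iff: "x \<in> V \<longleftrightarrow> fst x \<subseteq> {..<n} \<and>
   (if proper_elt n (fst x) then 1 \<le> snd x \<and> snd x \<le> k (fst x) else snd x = 1)"
  by (cases x) (simp add: blowup_carrier_def)

lemma carrier_snd_ge_1: "x \<in> V \<Longrightarrow> 1 \<le> snd x"
  unfolding carrier_iff by (auto split: if_splits)

lemma vertices_subset_carrier: "vertices \<subseteq> V"
  unfolding subset_iff vertices_def carrier_iff proper_elt_def by auto

lemma vertex_fst: "x \<in> vertices \<Longrightarrow> fst x \<noteq> {} \<and> fst x \<subseteq> {..<n} \<and> fst x \<noteq> {..<n}"
  unfolding vertices_def proper_elt_def by auto

lemma bottom_of_chain_in_vertices: "proper_elt n a \<Longrightarrow> (a, 1) \<in> vertices"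
  using chain_len_pos by (simp add: vertices_def)

lemma singleton_in_vertices: "i < n \<Longrightarrow> ({i}, 1) \<in> vertices"
  using bottom_of_chain_in_vertices proper_elt_singleton n_ge_3 by simp

lemma compl_vertex_in_vertices: "x \<in> vertices \<Longrightarrow> compl_vertex x \<in> vertices"
  unfolding compl_vertex_def
  using bottom_of_chain_in_vertices proper_elt_Diff vertices_def by auto

lemma blowup_bot_le: "z \<in> V \<Longrightarrow> blowup_le blowup_bot z"
  unfolding carrier_iff blowup_le_def blowup_bot_def proper_elt_def
  by (cases "fst z = {}") auto

lemma is_meet_bot_iff:
  assumes "x \<in> V" "y \<in> V"
  shows "is_meet V blowup_le x y blowup_bot \<longleftrightarrow> fst x \<inter> fst y = {}"
proof
  assume meet: "is_meet V blowup_le x y blowup_bot"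
  define c where "c = fst x \<inter> fst y"
  \<comment> \<open>the bottom (c,1) of the chain over c is a common lower bound\<close>
  have "(c, 1) \<in> V" using assms chain_len_pos unfolding carrier_iff c_def by auto
  moreover have "blowup_le (c, 1) x" "blowup_le (c, 1) y"
    using carrier_snd_ge_1[OF assms(1)] carrier_snd_ge_1[OF assms(2)]
    unfolding blowup_le_def c_def by auto
  ultimately have "blowup_le (c, 1) blowup_bot" using meet unfolding is_meet_def by blast
  then show "fst x \<inter> fst y = {}" unfolding blowup_le_def blowup_bot_def c_def by auto
next
  assume disj: "fst x \<inter> fst y = {}"
  have bot: "blowup_bot \<in> V" unfolding blowup_bot_def blowup_carrier_def proper_elt_def by auto
  have "blowup_le w blowup_bot" if "w \<in> V" "blowup_le w x" "blowup_le w y" for w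
  proof -
    have "fst w = {}" using that(2,3) disj unfolding blowup_le_def by auto
    then show ?thesis using that(1) unfolding carrier_iff blowup_le_def blowup_bot_def proper_elt_def
      by auto
  qed
  then show "is_meet V blowup_le x y blowup_bot"
    unfolding is_meet_def using bot blowup_bot_le assms by blast
qed

lemma vertex_ne_bot: "x \<in> vertices \<Longrightarrow> x \<noteq> blowup_bot"
  using vertex_fst unfolding blowup_bot_def by fastforce

lemma blowup_zd_verts_eq: "blowup_zd_verts n k = vertices"
proof (rule set_eqI)
  fix x
  show "x \<in> blowup_zd_verts n k \<longleftrightarrow> x \<in> vertices"
  proof
    assume "x \<in> blowup_zd_verts n k"
    then obtain y where x: "x \<in> V" "x \<noteq> blowup_bot" and y: "y \<in> V" "y \<noteq> blowup_bot"
      and meet: "is_meet V blowup_le x y blowup_bot"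
      unfolding blowup_zd_verts_def zd_verts_def by auto
    have disj: "fst x \<inter> fst y = {}" using is_meet_bot_iff[OF x(1) y(1)] meet by simp
    have nonempty: "fst z \<noteq> {}" if "z \<in> V" "z \<noteq> blowup_bot" for z
      using that unfolding carrier_iff blowup_bot_def proper_elt_def by (cases z) auto
    have "fst x \<noteq> {..<n}" using nonempty[OF y] disj y(1) unfolding carrier_iff by auto
    then show "x \<in> vertices"
      using nonempty[OF x] x(1) unfolding carrier_iff vertices_def proper_elt_def by auto
  next
    assume x: "x \<in> vertices"
    then have cx: "compl_vertex x \<in> vertices" by (rule compl_vertex_in_vertices)
    have xV: "x \<in> V" and cxV: "compl_vertex x \<in> V" using x cx vertices_subset_carrier by auto
    have "is_meet V blowup_le x (compl_vertex x) blowup_bot"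
      using is_meet_bot_iff[OF xV cxV] by (simp add: compl_vertex_def)
    then show "x \<in> blowup_zd_verts n k"
      using xV cxV vertex_ne_bot[OF x] vertex_ne_bot[OF cx]
      unfolding blowup_zd_verts_def zd_verts_def by blast
  qed
qed

lemma blowup_zd_adj_iff: "E x y \<longleftrightarrow> x \<in> vertices \<and> y \<in> vertices \<and> fst x \<inter> fst y = {}"
proof -
  have "is_meet V blowup_le x y blowup_bot \<longleftrightarrow> fst x \<inter> fst y = {}"
    if "x \<in> vertices" "y \<in> vertices"
    using that vertices_subset_carrier by (intro is_meet_bot_iff) auto
  moreover have "x \<noteq> y" if "x \<in> vertices" "fst x \<inter> fst y = {}"
    using that vertex_fst[of x] by auto
  ultimately show ?thesis
    using blowup_zd_verts_eq unfolding blowup_zd_adj_def zd_adj_def blowup_zd_verts_def by auto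
qed

definition zd_dist :: "nat set \<times> nat \<Rightarrow> nat set \<times> nat \<Rightarrow> nat" where
  "zd_dist u v = (if u = v then 0 else if fst u \<inter> fst v = {} then 1
     else if fst u \<union> fst v \<noteq> {..<n} then 2 else 3)"

lemma gdist_eq_zd_dist:
  assumes u: "u \<in> vertices" and v: "v \<in> vertices"
  shows "gdist vertices E u v = zd_dist u v"
proof -
  have short: "\<not> walk_len vertices E u v l" if "u \<noteq> v" "fst u \<inter> fst v \<noteq> {}" "l < 2" for l
    using that by (auto simp: walk_len_0_iff walk_len_1_iff blowup_zd_adj_iff less_Suc_eq
        numeral_2_eq_2)
  consider "u = v" | "u \<noteq> v" "fst u \<inter> fst v = {}"
    | "u \<noteq> v" "fst u \<inter> fst v \<noteq> {}" "fst u \<union> fst v \<noteq> {..<n}"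
    | "u \<noteq> v" "fst u \<inter> fst v \<noteq> {}" "fst u \<union> fst v = {..<n}"
    by blast
  then show ?thesis
  proof cases
    case 1
    then show ?thesis using u by (intro gdist_eqI) (auto simp: walk_len_0_iff zd_dist_def)
  next
    case 2
    then show ?thesis using u v
      by (intro gdist_eqI) (auto simp: walk_len_0_iff walk_len_1_iff blowup_zd_adj_iff zd_dist_def)
  next
    case 3
    \<comment> \<open>the bottom of the chain over the complement of the union is a common neighbour\<close>
    define w where "w = ({..<n} - (fst u \<union> fst v), 1::nat)"
    have "proper_elt n (fst w)"
      using 3 vertex_fst[OF u] vertex_fst[OF v] unfolding w_def proper_elt_def by auto
    then have "w \<in> vertices" using bottom_of_chain_in_vertices unfolding w_def by simp
    then have "walk_len vertices E u v (Suc (Suc 0))"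
      unfolding walk_len_2_iff blowup_zd_adj_iff using u v
      by (intro bexI[of _ w]) (auto simp: w_def)
    then show ?thesis using short 3
      by (intro gdist_eqI) (auto simp: zd_dist_def numeral_2_eq_2)
  next
    case 4
    have "walk_len vertices E u v (Suc (Suc (Suc 0)))"
      using compl_vertex_in_vertices[OF u] compl_vertex_in_vertices[OF v] u v 4
        vertex_fst[OF u] vertex_fst[OF v]
      by (intro walk_len_3I[of u _ "compl_vertex u" "compl_vertex v"])
        (auto simp: blowup_zd_adj_iff compl_vertex_def)
    moreover have "\<not> walk_len vertices E u v (Suc (Suc 0))"
    proof
      assume "walk_len vertices E u v (Suc (Suc 0))"
      then obtain w where "w \<in> vertices" "fst u \<inter> fst w = {}" "fst w \<inter> fst v = {}"
        unfolding walk_len_2_iff blowup_zd_adj_iff by auto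
      then show False using 4 vertex_fst[of w] by blast
    qed
    ultimately show ?thesis using short 4
      by (intro gdist_eqI) (auto simp: zd_dist_def numeral_3_eq_3 less_Suc_eq)
  qed
qed

lemma max_distant_iff:
  assumes "u \<in> vertices" "v \<in> vertices"
  shows "max_distant vertices E u v \<longleftrightarrow>
    (\<forall>w\<in>vertices. fst u \<inter> fst w = {} \<longrightarrow> zd_dist v w \<le> zd_dist u v)"
  unfolding max_distant_def using assms gdist_eq_zd_dist blowup_zd_adj_iff[of u] by auto

lemma max_distant_if_overlapping:
  assumes u: "u \<in> vertices" and v: "v \<in> vertices"
    and "u \<noteq> v" "fst u \<inter> fst v \<noteq> {}" "\<not> fst u \<subset> fst v"
  shows "max_distant vertices E u v"
  unfolding max_distant_iff[OF u v]
proof (intro ballI impI)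
  fix w assume w: "w \<in> vertices" and disj: "fst u \<inter> fst w = {}"
  show "zd_dist v w \<le> zd_dist u v"
  proof (cases "fst u \<union> fst v = {..<n}")
    case True
    then show ?thesis using assms unfolding zd_dist_def by auto
  next
    case False
    \<comment> \<open>distance 3 from v to w would force fst u \<subseteq> {..<n} - fst w \<subseteq> fst v\<close>
    have "\<not> (fst v \<union> fst w = {..<n} \<and> fst v \<inter> fst w \<noteq> {})"
    proof
      assume vw: "fst v \<union> fst w = {..<n} \<and> fst v \<inter> fst w \<noteq> {}"
      then have "fst u \<subseteq> fst v" using disj vertex_fst[OF u] by blast
      then have "fst u = fst v" using assms(5) by blast
      then show False using vw disj by blast
    qed
    then show ?thesis using False assms unfolding zd_dist_def by auto
  qed
qed

lemma not_max_distant_self: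
  assumes u: "u \<in> vertices" shows "\<not> max_distant vertices E u u"
proof -
  have disj: "fst u \<inter> fst (compl_vertex u) = {}" by (auto simp: compl_vertex_def)
  then have "compl_vertex u \<noteq> u" using vertex_fst[OF u] by (metis Int_absorb)
  then have "zd_dist u (compl_vertex u) = 1" using disj by (simp add: zd_dist_def)
  moreover have "zd_dist u u = 0" by (simp add: zd_dist_def)
  ultimately show ?thesis
    using compl_vertex_in_vertices[OF u] disj unfolding max_distant_iff[OF u u] by force
qed

lemma not_max_distant_psubset:
  assumes u: "u \<in> vertices" and v: "v \<in> vertices" and sub: "fst u \<subset> fst v"
  shows "\<not> max_distant vertices E u v"
proof -
  \<comment> \<open>the complement of u is a neighbour of u at distance 3 from v, while v is at distance 2\<close>
  have "zd_dist u v = 2" using sub vertex_fst[OF u] vertex_fst[OF v] unfolding zd_dist_def by auto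
  moreover have "zd_dist v (compl_vertex u) = 3"
    using sub vertex_fst[OF u] vertex_fst[OF v] unfolding zd_dist_def compl_vertex_def by auto
  ultimately show ?thesis
    using compl_vertex_in_vertices[OF u] unfolding max_distant_iff[OF u v]
    by (auto simp: compl_vertex_def intro!: bexI[of _ "compl_vertex u"])
qed

lemma max_distant_disjoint:
  assumes u: "u \<in> vertices" and v: "v \<in> vertices" and disj: "fst u \<inter> fst v = {}"
    and md: "max_distant vertices E u v"
  shows "\<exists>x. fst v = {x} \<and> fst u = {..<n} - {x}"
proof -
  have "u \<noteq> v" using disj vertex_fst[OF u] by (metis Int_absorb)
  then have dist_uv: "zd_dist u v = 1" using disj unfolding zd_dist_def by simp
  have eq_v: "w = v" if "w \<in> vertices" "fst u \<inter> fst w = {}" "fst w \<inter> fst v \<noteq> {}" for w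
  proof -
    have "zd_dist v w \<le> zd_dist u v"
      using md that(1,2) unfolding max_distant_iff[OF u v] by blast
    then have "zd_dist v w \<le> 1" using dist_uv by simp
    then have "v = w \<or> fst v \<inter> fst w = {}" unfolding zd_dist_def by (simp split: if_splits)
    then show ?thesis using that(3) by blast
  qed
  obtain x where x: "x \<in> fst v" using vertex_fst[OF v] by blast
  have "x < n" "x \<notin> fst u" using x vertex_fst[OF v] disj by auto
  have "({x}, 1) = v"
    by (rule eq_v[OF singleton_in_vertices[OF \<open>x < n\<close>]]) (use x \<open>x \<notin> fst u\<close> in auto)
  then have fst_v: "fst v = {x}" by auto
  have "x \<in> fst (compl_vertex u) \<inter> fst v" using x \<open>x < n\<close> \<open>x \<notin> fst u\<close>
    by (simp add: compl_vertex_def)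
  then have "compl_vertex u = v"
    by (intro eq_v[OF compl_vertex_in_vertices[OF u]]) (auto simp: compl_vertex_def)
  then have "{..<n} - fst u = {x}" using fst_v by (metis compl_vertex_def fst_conv)
  then have "fst u = {..<n} - {x}" using vertex_fst[OF u] by blast
  then show ?thesis using fst_v by blast
qed

lemma mutually_max_distant_iff:
  assumes u: "u \<in> vertices" and v: "v \<in> vertices"
  shows "mutually_max_distant vertices E u v \<longleftrightarrow>
    u \<noteq> v \<and> fst u \<inter> fst v \<noteq> {} \<and> \<not> fst u \<subset> fst v \<and> \<not> fst v \<subset> fst u"
proof
  assume "mutually_max_distant vertices E u v"
  then have uv: "max_distant vertices E u v" and vu: "max_distant vertices E v u"
    unfolding mutually_max_distant_def by auto
  \<comment> \<open>a disjoint such pair would consist of a singleton and its complement, both ways round\<close>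
  have "fst u \<inter> fst v \<noteq> {}"
  proof
    assume disj: "fst u \<inter> fst v = {}"
    obtain x where x: "fst v = {x}" "fst u = {..<n} - {x}"
      using max_distant_disjoint[OF u v disj uv] by blast
    obtain y where y: "fst u = {y}"
      using max_distant_disjoint[OF v u _ vu] disj by (metis Int_commute)
    then have "{..<n} \<subseteq> {x, y}" using x(2) by blast
    then have "card {..<n} \<le> card {x, y}" by (intro card_mono) auto
    also have "\<dots> \<le> 2" by (simp add: card_insert_if)
    finally show False using n_ge_3 by simp
  qed
  then show "u \<noteq> v \<and> fst u \<inter> fst v \<noteq> {} \<and> \<not> fst u \<subset> fst v \<and> \<not> fst v \<subset> fst u"
    using uv vu not_max_distant_self[OF u] not_max_distant_psubset[OF u v]
      not_max_distant_psubset[OF v u] by blast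
next
  assume "u \<noteq> v \<and> fst u \<inter> fst v \<noteq> {} \<and> \<not> fst u \<subset> fst v \<and> \<not> fst v \<subset> fst u"
  then show "mutually_max_distant vertices E u v"
    unfolding mutually_max_distant_def
    using max_distant_if_overlapping[OF u v] max_distant_if_overlapping[OF v u] u v
    by (auto simp: Int_commute)
qed

section \<open>The strong resolving graph\<close>

lemma sr_independent_iff:
  assumes S: "S \<subseteq> vertices"
  shows "(\<forall>x\<in>S. \<forall>y\<in>S. \<not> sr_adj vertices E x y) \<longleftrightarrow> inj_on fst S \<and> laminar (fst ` S)"
proof -
  have adj: "sr_adj vertices E x y \<longleftrightarrow>
      x \<noteq> y \<and> fst x \<inter> fst y \<noteq> {} \<and> \<not> fst x \<subset> fst y \<and> \<not> fst y \<subset> fst x"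
    if "x \<in> S" "y \<in> S" for x y
    using mutually_max_distant_iff that S unfolding sr_adj_def by blast
  show ?thesis
  proof
    assume indep: "\<forall>x\<in>S. \<forall>y\<in>S. \<not> sr_adj vertices E x y"
    have "inj_on fst S"
    proof (rule inj_onI)
      fix x y assume "x \<in> S" "y \<in> S" "fst x = fst y"
      then show "x = y" using indep adj[of x y] vertex_fst[of x] S by auto
    qed
    moreover have "laminar (fst ` S)"
      unfolding laminar_def
    proof (intro ballI)
      fix A B assume "A \<in> fst ` S" "B \<in> fst ` S"
      then obtain x y where "x \<in> S" "y \<in> S" "A = fst x" "B = fst y" by blast
      then show "A \<subseteq> B \<or> B \<subseteq> A \<or> A \<inter> B = {}"
        using indep adj[of x y] by (cases "x = y") auto
    qed
    ultimately show "inj_on fst S \<and> laminar (fst ` S)" ..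
  next
    assume "inj_on fst S \<and> laminar (fst ` S)"
    then have inj: "inj_on fst S" and lam: "laminar (fst ` S)" by auto
    show "\<forall>x\<in>S. \<forall>y\<in>S. \<not> sr_adj vertices E x y"
    proof (intro ballI notI)
      fix x y assume x: "x \<in> S" and y: "y \<in> S" and "sr_adj vertices E x y"
      then have "x \<noteq> y" "fst x \<inter> fst y \<noteq> {}" "\<not> fst x \<subset> fst y" "\<not> fst y \<subset> fst x"
        using adj by auto
      moreover have "fst x \<noteq> fst y" using inj x y \<open>x \<noteq> y\<close> by (auto dest: inj_onD)
      moreover have "fst x \<subseteq> fst y \<or> fst y \<subseteq> fst x \<or> fst x \<inter> fst y = {}"
        using lam x y unfolding laminar_def by blast
      ultimately show False by blast
    qed
  qed
qed

definition rigid_atoms :: "nat set" where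
  "rigid_atoms = {i. i < n \<and> k {i} = 1}"

lemma rigid_atom_not_sr_vert:
  assumes i: "i \<in> rigid_atoms" and u: "u \<in> vertices" "fst u = {i}"
  shows "u \<notin> sr_verts vertices E"
proof
  assume "u \<in> sr_verts vertices E"
  then obtain v where v: "v \<in> vertices" and "mutually_max_distant vertices E u v"
    unfolding sr_verts_def by blast
  then have "u \<noteq> v" "i \<in> fst v" "\<not> {i} \<subset> fst v"
    using mutually_max_distant_iff[OF u(1) v] u(2) by auto
  then have "fst v = {i}" by blast
  then have "snd v = 1" "snd u = 1" using i u v unfolding rigid_atoms_def vertices_def by auto
  then show False using \<open>u \<noteq> v\<close> \<open>fst v = {i}\<close> u(2) by (simp add: prod_eq_iff)
qed

lemma card_sr_independent_le:
  assumes S: "S \<subseteq> sr_verts vertices E" and indep: "\<forall>x\<in>S. \<forall>y\<in>S. \<not> sr_adj vertices E x y"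
  shows "card S \<le> 2 * n - 2 - card rigid_atoms"
proof -
  have SV: "S \<subseteq> vertices" using S unfolding sr_verts_def by blast
  then have inj: "inj_on fst S" and lam: "laminar (fst ` S)"
    using sr_independent_iff indep by auto
  \<comment> \<open>the rigid atoms and the top can be added to the laminar family of underlying sets\<close>
  define T where "T = insert {..<n} (fst ` S \<union> (\<lambda>i. {i}) ` rigid_atoms)"
  have sub: "A \<subseteq> {..<n}" if "A \<in> fst ` S \<union> (\<lambda>i. {i}) ` rigid_atoms" for A
    using that SV vertex_fst unfolding rigid_atoms_def by auto
  have "laminar T"
    unfolding T_def using laminar_insert_superset[OF laminar_Un_singletons[OF lam]] sub by blast
  moreover have "T \<subseteq> Pow {..<n}" unfolding T_def using sub by auto
  moreover have "{} \<notin> T"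
  proof -
    have "{} \<notin> fst ` S" using SV vertex_fst by fastforce
    moreover have "{..<n} \<noteq> {}" using n_ge_3 by (simp add: lessThan_empty_iff)
    ultimately show ?thesis unfolding T_def by auto
  qed
  ultimately have "card T < 2 * n" using card_laminar_less[of "{..<n}" T] n_ge_3
    by (auto simp: lessThan_empty_iff)
  moreover have "fst ` S \<inter> (\<lambda>i. {i}) ` rigid_atoms = {}"
    using rigid_atom_not_sr_vert S SV by fastforce
  moreover have "{..<n} \<notin> fst ` S \<union> (\<lambda>i. {i}) ` rigid_atoms"
  proof -
    have "{i} \<noteq> {..<n}" if "i < n" for i
      using proper_elt_singleton[OF that] n_ge_3 unfolding proper_elt_def by simp
    then show ?thesis using SV vertex_fst unfolding rigid_atoms_def by fastforce
  qed
  moreover have "finite (fst ` S \<union> (\<lambda>i. {i}) ` rigid_atoms)"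
    using sub by (meson finite_Pow_iff finite_lessThan finite_subset subsetI PowI)
  ultimately have "card (fst ` S) + card ((\<lambda>i. {i}) ` rigid_atoms) + 1 < 2 * n"
    unfolding T_def by (simp add: card_Un_disjoint)
  then show ?thesis using card_image[OF inj] card_image[of "\<lambda>i. {i}" rigid_atoms] by simp
qed

lemma nonrigid_atom_in_sr_verts:
  assumes "i < n" "i \<notin> rigid_atoms"
  shows "({i}, 1) \<in> sr_verts vertices E"
proof -
  have "k {i} \<ge> 2"
    using assms chain_len_pos proper_elt_singleton n_ge_3 unfolding rigid_atoms_def by force
  then have "({i}, 2) \<in> vertices"
    using assms proper_elt_singleton n_ge_3 unfolding vertices_def by auto
  moreover have "({i}, 1) \<in> vertices" using singleton_in_vertices[OF assms(1)] .
  ultimately have "mutually_max_distant vertices E ({i}, 1) ({i}, 2)"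
    by (simp add: mutually_max_distant_iff)
  then show ?thesis unfolding sr_verts_def mutually_max_distant_def by blast
qed

lemma initial_segment_in_sr_verts:
  assumes "2 \<le> t" "t < n"
  shows "({..<t}, 1) \<in> sr_verts vertices E"
proof -
  \<comment> \<open>a partner: {0} \<union> {t..<n} overlaps {..<t} in 0, misses 1 and contains t\<close>
  define b where "b = insert 0 {t..<n}"
  have mem: "0 \<in> {..<t} \<inter> b" "1 \<in> {..<t} - b" "t \<in> b - {..<t}"
    using assms unfolding b_def by auto
  have "b \<subseteq> {..<n}" using assms unfolding b_def by auto
  then have "proper_elt n b" using mem assms unfolding proper_elt_def by auto
  then have "({..<t}, 1) \<in> vertices" "(b, 1) \<in> vertices"
    using bottom_of_chain_in_vertices proper_elt_lessThan assms by auto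
  moreover have "{..<t} \<noteq> b" "{..<t} \<inter> b \<noteq> {}" "\<not> {..<t} \<subset> b" "\<not> b \<subset> {..<t}"
    using mem by blast+
  ultimately have "mutually_max_distant vertices E ({..<t}, 1) (b, 1)"
    by (simp add: mutually_max_distant_iff)
  then show ?thesis unfolding sr_verts_def mutually_max_distant_def by blast
qed

lemma card_rigid_atoms_le: "card rigid_atoms \<le> n"
  using card_mono[of "{..<n}" rigid_atoms] unfolding rigid_atoms_def by auto

lemma sr_independent_witness:
  "\<exists>S. S \<subseteq> sr_verts vertices E \<and> (\<forall>x\<in>S. \<forall>y\<in>S. \<not> sr_adj vertices E x y)
     \<and> card S = 2 * n - 2 - card rigid_atoms"
proof -
  define segments where "segments = (\<lambda>t. {..<t}) ` {2..<n}"
  define atoms where "atoms = (\<lambda>i. {i}) ` ({..<n} - rigid_atoms)"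
  define S where "S = (\<lambda>a. (a, 1::nat)) ` (segments \<union> atoms)"
  have SR: "S \<subseteq> sr_verts vertices E"
    unfolding S_def atoms_def segments_def
    using nonrigid_atom_in_sr_verts initial_segment_in_sr_verts by auto
  then have "S \<subseteq> vertices" unfolding sr_verts_def by blast
  moreover have "inj_on fst S" unfolding S_def by (auto simp: inj_on_def)
  moreover have "fst ` S = segments \<union> atoms" unfolding S_def by force
  moreover have "laminar (segments \<union> atoms)"
    unfolding segments_def atoms_def by (rule laminar_Un_singletons[OF laminar_lessThan])
  ultimately have indep: "\<forall>x\<in>S. \<forall>y\<in>S. \<not> sr_adj vertices E x y"
    using sr_independent_iff by simp
  have "card S = card (segments \<union> atoms)"
    unfolding S_def by (rule card_image) (simp add: inj_on_def)
  also have "\<dots> = card segments + card atoms"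
    unfolding segments_def atoms_def
    by (rule card_Un_disjoint) (use lessThan_ne_singleton in auto)
  also have "card segments = n - 2"
    unfolding segments_def by (subst card_image) (auto simp: inj_on_def lessThan_eq_iff)
  also have "card atoms = n - card rigid_atoms"
  proof -
    have "rigid_atoms \<subseteq> {..<n}" "finite rigid_atoms" unfolding rigid_atoms_def by auto
    then show ?thesis unfolding atoms_def by (simp add: card_image card_Diff_subset)
  qed
  finally have "card S = 2 * n - 2 - card rigid_atoms"
    using card_rigid_atoms_le n_ge_3 by simp
  then show ?thesis using SR indep by blast
qed

lemma beta_SR_eq: "beta_SR n k = 2 * n - 2 - card rigid_atoms"
proof -
  obtain S where "S \<subseteq> sr_verts vertices E" "\<forall>x\<in>S. \<forall>y\<in>S. \<not> sr_adj vertices E x y"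
    "card S = 2 * n - 2 - card rigid_atoms"
    using sr_independent_witness by blast
  then show ?thesis unfolding beta_SR_def blowup_zd_verts_eq
    using card_sr_independent_le by (intro indep_number_eqI) auto
qed

lemma perp_eq:
  assumes "x \<in> V" shows "perp V blowup_le blowup_bot x = {z \<in> V. fst x \<inter> fst z = {}}"
  using is_meet_bot_iff[OF assms] unfolding perp_def by blast

lemma atom_class_card_eq:
  assumes i: "i < n" shows "atom_class_card n k i = k {i}"
proof -
  have iV: "({i}, 1) \<in> V" using singleton_in_vertices[OF i] vertices_subset_carrier by blast
  have "eq_class V blowup_le blowup_bot ({i}, 1) = {y \<in> V. fst y = {i}}"
  proof (intro set_eqI iffI)
    fix y assume "y \<in> eq_class V blowup_le blowup_bot ({i}, 1)"
    then have yV: "y \<in> V" and "perp V blowup_le blowup_bot y = perp V blowup_le blowup_bot ({i}, 1)"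
      unfolding eq_class_def by auto
    \<comment> \<open>test the two annihilators against the atoms\<close>
    then have "{z \<in> V. fst y \<inter> fst z = {}} = {z \<in> V. {i} \<inter> fst z = {}}"
      using perp_eq[OF yV] perp_eq[OF iV] by simp
    then have "j \<in> fst y \<longleftrightarrow> j = i" if "j < n" for j
      using singleton_in_vertices[OF that] vertices_subset_carrier by (auto simp: set_eq_iff)
    moreover have "fst y \<subseteq> {..<n}" using yV unfolding carrier_iff by auto
    ultimately show "y \<in> {y \<in> V. fst y = {i}}" using i yV by auto
  next
    fix y assume "y \<in> {y \<in> V. fst y = {i}}"
    then show "y \<in> eq_class V blowup_le blowup_bot ({i}, 1)"
      unfolding eq_class_def using perp_eq iV by auto
  qed
  also have "\<dots> = Pair {i} ` {1..k {i}}"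
    using proper_elt_singleton[OF i] n_ge_3 i unfolding carrier_iff by (auto simp: image_iff)
  finally show ?thesis unfolding atom_class_card_def by (simp add: card_image inj_on_def)
qed

end

theorem mainTheorem10:
  fixes n m :: nat and k :: "nat set \<Rightarrow> nat"
  assumes "n \<ge> 3"
    and "\<forall>a. proper_elt n a \<longrightarrow> 1 \<le> k a"
  shows "((\<forall>a. proper_elt n a \<longrightarrow> k a = 1) \<longrightarrow> beta_SR n k = n - 2)
       \<and> ((\<forall>i<n. atom_class_card n k i \<ge> 2) \<longrightarrow> beta_SR n k = 2 * n - 2)
       \<and> (card {i. i < n \<and> atom_class_card n k i = 1} = m \<longrightarrow> beta_SR n k = 2 * n - m - 2)"
proof -
  interpret blowup n k using assms by unfold_locales
  have rigid: "{i. i < n \<and> atom_class_card n k i = 1} = rigid_atoms"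
    unfolding rigid_atoms_def using atom_class_card_eq by auto
  have "rigid_atoms = {..<n}" if "\<forall>a. proper_elt n a \<longrightarrow> k a = 1"
    using that proper_elt_singleton n_ge_3 unfolding rigid_atoms_def by auto
  moreover have "rigid_atoms = {}" if "\<forall>i<n. atom_class_card n k i \<ge> 2"
    unfolding rigid[symmetric] using that by fastforce
  ultimately show ?thesis using beta_SR_eq rigid by auto
qed

end
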